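(* Let $P:\mathcal{C}^{\mathrm{op}}\to\mathbf{Hey}$ be a Gödel hyperdoctrine. Let $A,B$ be objects of $\mathcal{C}$, $\beta\in P(A\times B)$, and let $\alpha\in P(A)$ be existential-free. If \[ a:A\;|\;\top\vdash\alpha(a)\rightarrow\exists b.\beta(a,b),\] then \[ a:A\;|\;\top\vdash\exists b.(\alpha(a)\rightarrow\beta(a,b)).\]
   Context: A hyperdoctrine is a functor $P:\mathcal{C}^{\mathrm{op}}\to\mathbf{Hey}$ from a cartesian closed category $\mathcal{C}$ to Heyting algebras such that for every arrow $f:A\to B$ the homomorphism $P_f:P(B)\to P(A)$ has a left adjoint $\exists_f$ and a right adjoint $\forall_f$ satisfying the Beck–Chevalley conditions. A Gödel hyperdoctrine is a hyperdoctrine which (viewed as a functor to $\mathbf{Pos}$) is a Gödel doctrine. A doctrine $P:\mathcal{C}^{\mathrm{op}}\to\mathbf{Pos}$ ($\mathcal{C}$ with finite products) is existential/universal if reindexing along each product projection $\pi$ has a left adjoint $\exists_\pi$ / right adjoint $\forall_\pi$ satisfying Beck–Chevalley along pullbacks of projections. Notation: $a:A\;|\;\phi\vdash\psi$ means $\phi\le\psi$ in $P(A)$; $\exists b.\psi(a,b)=\exists_{\pi_A}\psi$, $\forall b.\psi(a,b)=\forall_{\pi_A}\psi$; $\top,\rightarrow$ are the Heyting operations in the fibre; substitution is reindexing. In an existential doctrine, $\alpha\in P(A)$ is an existential splitting if for every $B$ and $\beta\in P(A\times B)$ with $\alpha\le\exists_{\pi_A}\beta$ there is $g:A\to B$ with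 $\alpha\le P_{\langle1_A,g\rangle}\beta$; $\alpha\in P(I)$ is existential-free if $P_f\alpha$ is an existential splitting for every $f:A\to I$. In a universal doctrine $Q$, $\alpha\in Q(I)$ is universal-free if for every $f:A\to I$, every $B$ and every $\beta\in Q(A\times B)$ with $\forall_{\pi_A}\beta\le Q_f\alpha$ there is $g:A\to B$ with $Q_{\langle1_A,g\rangle}\beta\le Q_f\alpha$. Enough existential-free (universal-free) predicates: every $\alpha\in P(I)$ equals $\exists_{\pi_I}\beta$ (resp. $\forall_{\pi_I}\beta$) for some $A$ and existential-free (universal-free) $\beta\in P(I\times A)$. A Gödel doctrine: (1) $\mathcal{C}$ cartesian closed; (2) $P$ existential and universal; (3) $P$ has enough existential-free predicates; (4) existential-free predicates are stable under $\forall_\pi$ for projections $\pi$; (5) the sub-doctrine $P'$ of existential-free predicates has enough universal-free predicates. *)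

theory Defs
  imports Main
begin

record ('o,'m) cat =
  Obj :: "'o set"
  Arr :: "'m set"
  src :: "'m \<Rightarrow> 'o"
  tgt :: "'m \<Rightarrow> 'o"
  idm :: "'o \<Rightarrow> 'm"
  cmp :: "'m \<Rightarrow> 'm \<Rightarrow> 'm"   (* cmp g f = g o f *)

definition hom :: "('o,'m,'x) cat_scheme \<Rightarrow> 'm \<Rightarrow> 'o \<Rightarrow> 'o \<Rightarrow> bool" where
  "hom C f A B \<longleftrightarrow> f \<in> Arr C \<and> src C f = A \<and> tgt C f = B"

definition category :: "('o,'m,'x) cat_scheme \<Rightarrow> bool" where
  "category C \<longleftrightarrow>
     (\<forall>f \<in> Arr C. src C f \<in> Obj C \<and> tgt C f \<in> Obj C) \<and>
     (\<forall>A \<in> Obj C. hom C (idm C A) A A) \<and>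
     (\<forall>f g A B D. hom C f A B \<longrightarrow> hom C g B D \<longrightarrow> hom C (cmp C g f) A D) \<and>
     (\<forall>f A B. hom C f A B \<longrightarrow> cmp C f (idm C A) = f \<and> cmp C (idm C B) f = f) \<and>
     (\<forall>f g h A B D E. hom C f A B \<longrightarrow> hom C g B D \<longrightarrow> hom C h D E \<longrightarrow>
        cmp C h (cmp C g f) = cmp C (cmp C h g) f)"

text \<open>Cartesian closed categories, with chosen terminal object and binary products;
  exponentials are required to exist.\<close>

record ('o,'m) ccat = "('o,'m) cat" +
  trm :: "'o"
  prod :: "'o \<Rightarrow> 'o \<Rightarrow> 'o"
  pr1 :: "'o \<Rightarrow> 'o \<Rightarrow> 'm"
  pr2 :: "'o \<Rightarrow> 'o \<Rightarrow> 'm"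
  pair :: "'m \<Rightarrow> 'm \<Rightarrow> 'm"

definition cartesian :: "('o,'m,'x) ccat_scheme \<Rightarrow> bool" where
  "cartesian C \<longleftrightarrow> category C \<and>
     trm C \<in> Obj C \<and> (\<forall>A \<in> Obj C. \<exists>!f. hom C f A (trm C)) \<and>
     (\<forall>A \<in> Obj C. \<forall>B \<in> Obj C.
        prod C A B \<in> Obj C \<and> hom C (pr1 C A B) (prod C A B) A \<and> hom C (pr2 C A B) (prod C A B) B \<and>
        (\<forall>X f g. hom C f X A \<longrightarrow> hom C g X B \<longrightarrow>
            hom C (pair C f g) X (prod C A B) \<and>
            cmp C (pr1 C A B) (pair C f g) = f \<and> cmp C (pr2 C A B) (pair C f g) = g) \<and>
        (\<forall>X h. hom C h X (prod C A B) \<longrightarrow>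
            h = pair C (cmp C (pr1 C A B) h) (cmp C (pr2 C A B) h)))"

definition cartesian_closed :: "('o,'m,'x) ccat_scheme \<Rightarrow> bool" where
  "cartesian_closed C \<longleftrightarrow> cartesian C \<and>
     (\<forall>B \<in> Obj C. \<forall>D \<in> Obj C. \<exists>E ev. E \<in> Obj C \<and> hom C ev (prod C E B) D \<and>
        (\<forall>A \<in> Obj C. \<forall>f. hom C f (prod C A B) D \<longrightarrow>
           (\<exists>!h. hom C h A E \<and>
              cmp C ev (pair C (cmp C h (pr1 C A B)) (pr2 C A B)) = f)))"

definition pullback :: "('o,'m,'x) cat_scheme \<Rightarrow> 'm \<Rightarrow> 'm \<Rightarrow> 'm \<Rightarrow> 'm \<Rightarrow> bool" where
  \<comment> \<open>the square  p : W \<rightarrow> X,  q : W \<rightarrow> Y,  f : X \<rightarrow> Z,  g : Y \<rightarrow> Z  is a pullback\<close>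
  "pullback C f g p q \<longleftrightarrow>
     f \<in> Arr C \<and> g \<in> Arr C \<and> p \<in> Arr C \<and> q \<in> Arr C \<and>
     tgt C f = tgt C g \<and> src C p = src C q \<and> tgt C p = src C f \<and> tgt C q = src C g \<and>
     cmp C f p = cmp C g q \<and>
     (\<forall>h k V. hom C h V (src C f) \<longrightarrow> hom C k V (src C g) \<longrightarrow> cmp C f h = cmp C g k \<longrightarrow>
        (\<exists>!u. hom C u V (src C p) \<and> cmp C p u = h \<and> cmp C q u = k))"

text \<open>A functor into Heyting algebras: fibre carriers Fib A, fibre orders leq A,
  Heyting operations, reindexing reix f (= P_f), and adjoints Exi f, Alli f.\<close>

record ('o,'m,'p) hdoc =
  Fib :: "'o \<Rightarrow> 'p set"
  leq :: "'o \<Rightarrow> 'p \<Rightarrow> 'p \<Rightarrow> bool"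
  ptop :: "'o \<Rightarrow> 'p"
  pbot :: "'o \<Rightarrow> 'p"
  pconj :: "'o \<Rightarrow> 'p \<Rightarrow> 'p \<Rightarrow> 'p"
  pdisj :: "'o \<Rightarrow> 'p \<Rightarrow> 'p \<Rightarrow> 'p"
  pimp :: "'o \<Rightarrow> 'p \<Rightarrow> 'p \<Rightarrow> 'p"
  reix :: "'m \<Rightarrow> 'p \<Rightarrow> 'p"
  Exi :: "'m \<Rightarrow> 'p \<Rightarrow> 'p"
  Alli :: "'m \<Rightarrow> 'p \<Rightarrow> 'p"

definition heyting_fibre :: "('o,'m,'p) hdoc \<Rightarrow> 'o \<Rightarrow> bool" where
  "heyting_fibre P A \<longleftrightarrow>
     (let X = Fib P A; le = leq P A in
       (\<forall>x\<in>X. le x x) \<and>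
       (\<forall>x\<in>X. \<forall>y\<in>X. \<forall>z\<in>X. le x y \<longrightarrow> le y z \<longrightarrow> le x z) \<and>
       (\<forall>x\<in>X. \<forall>y\<in>X. le x y \<longrightarrow> le y x \<longrightarrow> x = y) \<and>
       ptop P A \<in> X \<and> (\<forall>x\<in>X. le x (ptop P A)) \<and>
       pbot P A \<in> X \<and> (\<forall>x\<in>X. le (pbot P A) x) \<and>
       (\<forall>x\<in>X. \<forall>y\<in>X. pconj P A x y \<in> X \<and>
          (\<forall>z\<in>X. le z (pconj P A x y) \<longleftrightarrow> le z x \<and> le z y)) \<and>
       (\<forall>x\<in>X. \<forall>y\<in>X. pdisj P A x y \<in> X \<and>
          (\<forall>z\<in>X. le (pdisj P A x y) z \<longleftrightarrow> le x z \<and> le y z)) \<and>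
       (\<forall>x\<in>X. \<forall>y\<in>X. pimp P A x y \<in> X \<and>
          (\<forall>z\<in>X. le z (pimp P A x y) \<longleftrightarrow> le (pconj P A z x) y)))"

definition hyperdoctrine :: "('o,'m,'x) ccat_scheme \<Rightarrow> ('o,'m,'p) hdoc \<Rightarrow> bool" where
  "hyperdoctrine C P \<longleftrightarrow> cartesian_closed C \<and>
     (\<forall>A \<in> Obj C. heyting_fibre P A) \<and>
     \<comment> \<open>functoriality (contravariant)\<close>
     (\<forall>A \<in> Obj C. \<forall>x \<in> Fib P A. reix P (idm C A) x = x) \<and>
     (\<forall>f g A B D. hom C f A B \<longrightarrow> hom C g B D \<longrightarrow>
        (\<forall>x \<in> Fib P D. reix P (cmp C g f) x = reix P f (reix P g x))) \<and>
     \<comment> \<open>reindexing is a Heyting algebra homomorphism\<close>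
     (\<forall>f A B. hom C f A B \<longrightarrow>
        (\<forall>x \<in> Fib P B. reix P f x \<in> Fib P A) \<and>
        reix P f (ptop P B) = ptop P A \<and> reix P f (pbot P B) = pbot P A \<and>
        (\<forall>x \<in> Fib P B. \<forall>y \<in> Fib P B.
           reix P f (pconj P B x y) = pconj P A (reix P f x) (reix P f y) \<and>
           reix P f (pdisj P B x y) = pdisj P A (reix P f x) (reix P f y) \<and>
           reix P f (pimp P B x y) = pimp P A (reix P f x) (reix P f y))) \<and>
     \<comment> \<open>left and right adjoints to reindexing\<close>
     (\<forall>f A B. hom C f A B \<longrightarrow>
        (\<forall>x \<in> Fib P A. Exi P f x \<in> Fib P B \<and> Alli P f x \<in> Fib P B) \<and>
        (\<forall>x \<in> Fib P A. \<forall>y \<in> Fib P B.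
           (leq P B (Exi P f x) y \<longleftrightarrow> leq P A x (reix P f y)) \<and>
           (leq P B y (Alli P f x) \<longleftrightarrow> leq P A (reix P f y) x))) \<and>
     \<comment> \<open>Beck--Chevalley conditions\<close>
     (\<forall>f g p q. pullback C f g p q \<longrightarrow>
        (\<forall>x \<in> Fib P (src C f).
           reix P g (Exi P f x) = Exi P q (reix P p x) \<and>
           reix P g (Alli P f x) = Alli P q (reix P p x)))"

definition ex_splitting :: "('o,'m,'x) ccat_scheme \<Rightarrow> ('o,'m,'p) hdoc \<Rightarrow> 'o \<Rightarrow> 'p \<Rightarrow> bool" where
  "ex_splitting C P A \<alpha> \<longleftrightarrow> \<alpha> \<in> Fib P A \<and>
     (\<forall>B \<in> Obj C. \<forall>\<beta> \<in> Fib P (prod C A B).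
        leq P A \<alpha> (Exi P (pr1 C A B) \<beta>) \<longrightarrow>
        (\<exists>g. hom C g A B \<and> leq P A \<alpha> (reix P (pair C (idm C A) g) \<beta>)))"

definition ex_free :: "('o,'m,'x) ccat_scheme \<Rightarrow> ('o,'m,'p) hdoc \<Rightarrow> 'o \<Rightarrow> 'p \<Rightarrow> bool" where
  "ex_free C P I \<alpha> \<longleftrightarrow> \<alpha> \<in> Fib P I \<and>
     (\<forall>A \<in> Obj C. \<forall>f. hom C f A I \<longrightarrow> ex_splitting C P A (reix P f \<alpha>))"

text \<open>Universal-free predicates of the sub-doctrine P' of existential-free predicates
  (its fibres are the existential-free elements; reindexing and \<forall> are those of P).\<close>

definition univ_free_exfree :: "('o,'m,'x) ccat_scheme \<Rightarrow> ('o,'m,'p) hdoc \<Rightarrow> 'o \<Rightarrow> 'p \<Rightarrow> bool" where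
  "univ_free_exfree C P I \<alpha> \<longleftrightarrow> ex_free C P I \<alpha> \<and>
     (\<forall>A \<in> Obj C. \<forall>f. hom C f A I \<longrightarrow>
        (\<forall>B \<in> Obj C. \<forall>\<beta>. ex_free C P (prod C A B) \<beta> \<longrightarrow>
           leq P A (Alli P (pr1 C A B) \<beta>) (reix P f \<alpha>) \<longrightarrow>
           (\<exists>g. hom C g A B \<and> leq P A (reix P (pair C (idm C A) g) \<beta>) (reix P f \<alpha>))))"

definition goedel_hyperdoctrine :: "('o,'m,'x) ccat_scheme \<Rightarrow> ('o,'m,'p) hdoc \<Rightarrow> bool" where
  "goedel_hyperdoctrine C P \<longleftrightarrow> hyperdoctrine C P \<and>
     \<comment> \<open>(3) enough existential-free predicates\<close>
     (\<forall>I \<in> Obj C. \<forall>\<alpha> \<in> Fib P I. \<exists>A \<in> Obj C. \<exists>\<beta>.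
        ex_free C P (prod C I A) \<beta> \<and> \<alpha> = Exi P (pr1 C I A) \<beta>) \<and>
     \<comment> \<open>(4) existential-free predicates are stable under \<forall> along projections\<close>
     (\<forall>I \<in> Obj C. \<forall>A \<in> Obj C. \<forall>\<beta>.
        ex_free C P (prod C I A) \<beta> \<longrightarrow> ex_free C P I (Alli P (pr1 C I A) \<beta>)) \<and>
     \<comment> \<open>(5) the sub-doctrine of existential-free predicates has enough universal-free predicates\<close>
     (\<forall>I \<in> Obj C. \<forall>\<alpha>. ex_free C P I \<alpha> \<longrightarrow> (\<exists>A \<in> Obj C. \<exists>\<beta>.
        univ_free_exfree C P (prod C I A) \<beta> \<and> \<alpha> = Alli P (pr1 C I A) \<beta>))"

end

theory Submission
  imports Defs
begin

text \<open>Since \<open>\<alpha>\<close> entails \<open>\<exists>b. \<beta>(a,b)\<close> and is an existential splitting, there is a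
  \<open>g : A \<rightarrow> B\<close> with \<open>\<alpha>(a) \<turnstile> \<beta>(a, g a)\<close>. Hence \<open>\<alpha>(a) \<rightarrow> \<beta>(a,b)\<close> holds at the point
  \<open>b = g a\<close>, i.e. its reindexing along the section \<open>\<langle>1\<^sub>A, g\<rangle>\<close> of the projection is \<open>\<top>\<close>, and
  reindexing along a section of \<open>\<pi>\<close> is always below \<open>\<exists>\<^sub>\<pi>\<close>.\<close>

context
  fixes P :: "('o,'m,'p) hdoc" and A :: 'o
  assumes hf: "heyting_fibre P A"
begin

lemma heyting_fibre_refl: "x \<in> Fib P A \<Longrightarrow> leq P A x x"
  using hf unfolding heyting_fibre_def Let_def by (elim conjE) metis

lemma heyting_fibre_trans:
  "\<lbrakk>x \<in> Fib P A; y \<in> Fib P A; z \<in> Fib P A; leq P A x y; leq P A y z\<rbrakk> \<Longrightarrow> leq P A x z"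
  using hf unfolding heyting_fibre_def Let_def by (elim conjE) metis

lemma heyting_fibre_top_closed: "ptop P A \<in> Fib P A"
  using hf unfolding heyting_fibre_def Let_def by (elim conjE) metis

lemma heyting_fibre_le_top: "x \<in> Fib P A \<Longrightarrow> leq P A x (ptop P A)"
  using hf unfolding heyting_fibre_def Let_def by (elim conjE) metis

lemma heyting_fibre_conj_closed: "x \<in> Fib P A \<Longrightarrow> y \<in> Fib P A \<Longrightarrow> pconj P A x y \<in> Fib P A"
  using hf unfolding heyting_fibre_def Let_def by (elim conjE) metis

lemma heyting_fibre_le_conj_iff:
  "\<lbrakk>x \<in> Fib P A; y \<in> Fib P A; z \<in> Fib P A\<rbrakk> \<Longrightarrow>
     leq P A z (pconj P A x y) \<longleftrightarrow> leq P A z x \<and> leq P A z y"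
  using hf unfolding heyting_fibre_def Let_def by (elim conjE) metis

lemma heyting_fibre_imp_closed: "x \<in> Fib P A \<Longrightarrow> y \<in> Fib P A \<Longrightarrow> pimp P A x y \<in> Fib P A"
  using hf unfolding heyting_fibre_def Let_def by (elim conjE) metis

lemma heyting_fibre_le_imp_iff:
  "\<lbrakk>x \<in> Fib P A; y \<in> Fib P A; z \<in> Fib P A\<rbrakk> \<Longrightarrow>
     leq P A z (pimp P A x y) \<longleftrightarrow> leq P A (pconj P A z x) y"
  using hf unfolding heyting_fibre_def Let_def by (elim conjE) metis

lemma heyting_fibre_top_le_imp_iff:
  assumes x: "x \<in> Fib P A" and y: "y \<in> Fib P A"
  shows "leq P A (ptop P A) (pimp P A x y) \<longleftrightarrow> leq P A x y"
proof -
  note top = heyting_fibre_top_closed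
  have conj: "pconj P A (ptop P A) x \<in> Fib P A"
    using heyting_fibre_conj_closed[OF top x] .
  have "leq P A x (pconj P A (ptop P A) x)"
    using heyting_fibre_le_conj_iff[OF top x x] heyting_fibre_le_top heyting_fibre_refl x by blast
  moreover have "leq P A (pconj P A (ptop P A) x) x"
    using heyting_fibre_le_conj_iff[OF top x conj] heyting_fibre_refl[OF conj] by blast
  ultimately show ?thesis
    using heyting_fibre_le_imp_iff[OF x y top] heyting_fibre_trans[OF x conj y]
      heyting_fibre_trans[OF conj x y] by blast
qed

end

lemma category_hom_objs: "category C \<Longrightarrow> hom C f A B \<Longrightarrow> A \<in> Obj C \<and> B \<in> Obj C"
  unfolding category_def hom_def by (elim conjE) metis

lemma category_idm_hom: "category C \<Longrightarrow> A \<in> Obj C \<Longrightarrow> hom C (idm C A) A A"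
  unfolding category_def by (elim conjE) metis

lemma cartesian_category: "cartesian C \<Longrightarrow> category C"
  unfolding cartesian_def by (elim conjE)

lemma cartesian_pr1_hom:
  "cartesian C \<Longrightarrow> A \<in> Obj C \<Longrightarrow> B \<in> Obj C \<Longrightarrow> hom C (pr1 C A B) (prod C A B) A"
  unfolding cartesian_def by (elim conjE) metis

lemma cartesian_pair:
  assumes "cartesian C" "A \<in> Obj C" "B \<in> Obj C" "hom C f X A" "hom C g X B"
  shows "hom C (pair C f g) X (prod C A B)" and "cmp C (pr1 C A B) (pair C f g) = f"
  using assms unfolding cartesian_def by (elim conjE; metis)+

lemma ex_splittingD:
  assumes "ex_splitting C P A \<alpha>" and "B \<in> Obj C" and "\<beta> \<in> Fib P (prod C A B)"
    and "leq P A \<alpha> (Exi P (pr1 C A B) \<beta>)"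
  obtains g where "hom C g A B" and "leq P A \<alpha> (reix P (pair C (idm C A) g) \<beta>)"
  using assms unfolding ex_splitting_def by blast

context
  fixes C :: "('o,'m,'x) ccat_scheme" and P :: "('o,'m,'p) hdoc"
  assumes hd: "hyperdoctrine C P"
begin

lemma hyperdoctrine_cartesian: "cartesian C"
  using hd unfolding hyperdoctrine_def cartesian_closed_def by (elim conjE)

lemma hyperdoctrine_hom_objs: "hom C f A B \<Longrightarrow> A \<in> Obj C \<and> B \<in> Obj C"
  by (rule category_hom_objs[OF cartesian_category[OF hyperdoctrine_cartesian]])

lemma hyperdoctrine_heyting_fibre: "A \<in> Obj C \<Longrightarrow> heyting_fibre P A"
  using hd unfolding hyperdoctrine_def by (elim conjE; simp)

lemma hyperdoctrine_reix_id: "A \<in> Obj C \<Longrightarrow> x \<in> Fib P A \<Longrightarrow> reix P (idm C A) x = x"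
  using hd unfolding hyperdoctrine_def by (elim conjE; simp)

lemma hyperdoctrine_reix_cmp:
  "\<lbrakk>hom C f A B; hom C g B D; x \<in> Fib P D\<rbrakk> \<Longrightarrow> reix P (cmp C g f) x = reix P f (reix P g x)"
  using hd unfolding hyperdoctrine_def by (elim conjE; simp)

lemma hyperdoctrine_reix_closed: "hom C f A B \<Longrightarrow> x \<in> Fib P B \<Longrightarrow> reix P f x \<in> Fib P A"
  using hd unfolding hyperdoctrine_def by (elim conjE; simp)

lemma hyperdoctrine_reix_imp:
  "\<lbrakk>hom C f A B; x \<in> Fib P B; y \<in> Fib P B\<rbrakk> \<Longrightarrow>
     reix P f (pimp P B x y) = pimp P A (reix P f x) (reix P f y)"
  using hd unfolding hyperdoctrine_def by (elim conjE; simp)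

lemma hyperdoctrine_Exi_closed: "hom C f A B \<Longrightarrow> x \<in> Fib P A \<Longrightarrow> Exi P f x \<in> Fib P B"
  using hd unfolding hyperdoctrine_def by (elim conjE; simp)

lemma hyperdoctrine_Exi_adjoint:
  "\<lbrakk>hom C f A B; x \<in> Fib P A; y \<in> Fib P B\<rbrakk> \<Longrightarrow>
     leq P B (Exi P f x) y \<longleftrightarrow> leq P A x (reix P f y)"
  using hd unfolding hyperdoctrine_def by (elim conjE; simp)

text \<open>Monotonicity follows from the left adjoint: \<open>\<exists>\<^sub>f f\<^sup>* x \<le> x \<le> y\<close>.\<close>

lemma reix_mono:
  assumes f: "hom C f A B" and x: "x \<in> Fib P B" and y: "y \<in> Fib P B" and le: "leq P B x y"
  shows "leq P A (reix P f x) (reix P f y)"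
proof -
  have hA: "heyting_fibre P A" and hB: "heyting_fibre P B"
    using hyperdoctrine_heyting_fibre hyperdoctrine_hom_objs[OF f] by blast+
  have fx: "reix P f x \<in> Fib P A" using hyperdoctrine_reix_closed[OF f x] .
  have efx: "Exi P f (reix P f x) \<in> Fib P B" using hyperdoctrine_Exi_closed[OF f fx] .
  have "leq P B (Exi P f (reix P f x)) x"
    using hyperdoctrine_Exi_adjoint[OF f fx x] heyting_fibre_refl[OF hA fx] by (rule iffD2)
  then have "leq P B (Exi P f (reix P f x)) y"
    using le by (rule heyting_fibre_trans[OF hB efx x y])
  then show ?thesis unfolding hyperdoctrine_Exi_adjoint[OF f fx y] .
qed

lemma reix_section_cancel:
  assumes f: "hom C f X Y" and s: "hom C s Y X" and fs: "cmp C f s = idm C Y"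
    and y: "y \<in> Fib P Y"
  shows "reix P s (reix P f y) = y"
proof -
  have "reix P s (reix P f y) = reix P (cmp C f s) y"
    using hyperdoctrine_reix_cmp[OF s f y] by (rule sym)
  also have "\<dots> = y"
    using hyperdoctrine_reix_id hyperdoctrine_hom_objs[OF f] y unfolding fs by blast
  finally show ?thesis .
qed

lemma reix_section_le_Exi:
  assumes f: "hom C f X Y" and s: "hom C s Y X" and fs: "cmp C f s = idm C Y"
    and \<phi>: "\<phi> \<in> Fib P X"
  shows "leq P Y (reix P s \<phi>) (Exi P f \<phi>)"
proof -
  have hY: "heyting_fibre P Y"
    using hyperdoctrine_heyting_fibre hyperdoctrine_hom_objs[OF f] by blast
  have e\<phi>: "Exi P f \<phi> \<in> Fib P Y" using hyperdoctrine_Exi_closed[OF f \<phi>] .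
  have "leq P X \<phi> (reix P f (Exi P f \<phi>))"
    using hyperdoctrine_Exi_adjoint[OF f \<phi> e\<phi>] heyting_fibre_refl[OF hY e\<phi>] by (rule iffD1)
  then have "leq P Y (reix P s \<phi>) (reix P s (reix P f (Exi P f \<phi>)))"
    by (rule reix_mono[OF s \<phi> hyperdoctrine_reix_closed[OF f e\<phi>]])
  then show ?thesis unfolding reix_section_cancel[OF f s fs e\<phi>] .
qed

lemma ex_free_imp_ex_splitting:
  assumes "A \<in> Obj C" and "ex_free C P A \<alpha>"
  shows "ex_splitting C P A \<alpha>"
proof -
  have "hom C (idm C A) A A"
    using category_idm_hom[OF cartesian_category[OF hyperdoctrine_cartesian] assms(1)] .
  moreover have "reix P (idm C A) \<alpha> = \<alpha>"
    using hyperdoctrine_reix_id assms unfolding ex_free_def by blast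
  ultimately show ?thesis using assms unfolding ex_free_def by metis
qed

lemma top_le_Exi_imp_of_witness:
  assumes A: "A \<in> Obj C" and B: "B \<in> Obj C" and \<alpha>: "\<alpha> \<in> Fib P A"
    and \<beta>: "\<beta> \<in> Fib P (prod C A B)" and g: "hom C g A B"
    and \<alpha>_le: "leq P A \<alpha> (reix P (pair C (idm C A) g) \<beta>)"
  shows "leq P A (ptop P A) (Exi P (pr1 C A B) (pimp P (prod C A B) (reix P (pr1 C A B) \<alpha>) \<beta>))"
proof -
  define s where "s = pair C (idm C A) g"
  define \<phi> where "\<phi> = pimp P (prod C A B) (reix P (pr1 C A B) \<alpha>) \<beta>"
  have cart: "cartesian C" by (rule hyperdoctrine_cartesian)
  have hA: "heyting_fibre P A" using hyperdoctrine_heyting_fibre[OF A] .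
  have \<pi>: "hom C (pr1 C A B) (prod C A B) A" using cartesian_pr1_hom[OF cart A B] .
  have idA: "hom C (idm C A) A A" using category_idm_hom[OF cartesian_category[OF cart] A] .
  have s: "hom C s A (prod C A B)" and \<pi>s: "cmp C (pr1 C A B) s = idm C A"
    using cartesian_pair[OF cart A B idA g] unfolding s_def .
  have \<pi>\<alpha>: "reix P (pr1 C A B) \<alpha> \<in> Fib P (prod C A B)"
    using hyperdoctrine_reix_closed[OF \<pi> \<alpha>] .
  have "heyting_fibre P (prod C A B)"
    using hyperdoctrine_heyting_fibre hyperdoctrine_hom_objs[OF \<pi>] by blast
  then have \<phi>: "\<phi> \<in> Fib P (prod C A B)"
    unfolding \<phi>_def using \<pi>\<alpha> \<beta> by (rule heyting_fibre_imp_closed)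
  have "leq P A (ptop P A) (pimp P A \<alpha> (reix P s \<beta>))"
    unfolding heyting_fibre_top_le_imp_iff[OF hA \<alpha> hyperdoctrine_reix_closed[OF s \<beta>]]
    using \<alpha>_le unfolding s_def .
  then have "leq P A (ptop P A) (reix P s \<phi>)"
    unfolding \<phi>_def hyperdoctrine_reix_imp[OF s \<pi>\<alpha> \<beta>] reix_section_cancel[OF \<pi> s \<pi>s \<alpha>] .
  then show ?thesis
    unfolding \<phi>_def[symmetric]
    using reix_section_le_Exi[OF \<pi> s \<pi>s \<phi>]
    by (rule heyting_fibre_trans[OF hA heyting_fibre_top_closed[OF hA]
          hyperdoctrine_reix_closed[OF s \<phi>] hyperdoctrine_Exi_closed[OF \<pi> \<phi>]])
qed

end

theorem theorem5:
  fixes C :: "('o,'m,'x) ccat_scheme" and P :: "('o,'m,'p) hdoc"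
  assumes "goedel_hyperdoctrine C P"
    and "A \<in> Obj C" and "B \<in> Obj C"
    and "\<beta> \<in> Fib P (prod C A B)"
    and "ex_free C P A \<alpha>"
    and "leq P A (ptop P A) (pimp P A \<alpha> (Exi P (pr1 C A B) \<beta>))"
  shows "leq P A (ptop P A)
           (Exi P (pr1 C A B) (pimp P (prod C A B) (reix P (pr1 C A B) \<alpha>) \<beta>))"
proof -
  note A = assms(2) and B = assms(3) and \<beta> = assms(4)
  have hd: "hyperdoctrine C P" using assms(1) unfolding goedel_hyperdoctrine_def by (elim conjE)
  have hA: "heyting_fibre P A" using hyperdoctrine_heyting_fibre[OF hd A] .
  have \<pi>: "hom C (pr1 C A B) (prod C A B) A"
    using cartesian_pr1_hom[OF hyperdoctrine_cartesian[OF hd] A B] .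
  have \<alpha>: "\<alpha> \<in> Fib P A" using assms(5) unfolding ex_free_def by (elim conjE)
  have "leq P A \<alpha> (Exi P (pr1 C A B) \<beta>)"
    using assms(6) unfolding heyting_fibre_top_le_imp_iff[OF hA \<alpha> hyperdoctrine_Exi_closed[OF hd \<pi> \<beta>]] .
  then obtain g where "hom C g A B" and "leq P A \<alpha> (reix P (pair C (idm C A) g) \<beta>)"
    using ex_splittingD[OF ex_free_imp_ex_splitting[OF hd A assms(5)] B \<beta>] by blast
  then show ?thesis using top_le_Exi_imp_of_witness[OF hd A B \<alpha> \<beta>] by blast
qed

end
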